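(* Let $(X,\varphi)$ be an irreducible Smale space and $\mathcal R_1$ a Markov partition with $\max_{R\in\mathcal R_1}\operatorname{diam}R\le\varepsilon_X''$, generating $(\mathcal R_n)_{n\ge0}$. Then for every $n\in\mathbb N$, $$\mathcal R_{n+1}=\{R\in\varphi(\mathcal R_n)\vee\mathcal R_n\vee\varphi^{-1}(\mathcal R_n):\operatorname{int}(R)\ne\varnothing\}.$$
   Context: A Smale space $(X,\varphi)$: compact metric space $(X,d)$, homeomorphism $\varphi$, constants $\varepsilon_X>0,\lambda_X>1$ and a continuous bracket $[\cdot,\cdot]$ on $\{(x,y):d(x,y)\le\varepsilon_X\}$ with $[x,x]=x$, $[x,[y,z]]=[x,z]$, $[[x,y],z]=[x,z]$, $\varphi([x,y])=[\varphi(x),\varphi(y)]$ (whenever defined), such that $\varphi$ contracts distances by $\lambda_X^{-1}$ on local stable sets $X^s(x,\varepsilon)=\{y:d(x,y)<\varepsilon,[x,y]=y\}$ and $\varphi^{-1}$ contracts by $\lambda_X^{-1}$ on local unstable sets $X^u(x,\varepsilon)=\{y:d(x,y)<\varepsilon,[y,x]=y\}$. Irreducible: for nonempty open $U,V$ some $n\in\mathbb N$ has $\varphi^n(U)\cap V\ne\varnothing$. Fix $\varepsilon_X'\in(0,\varepsilon_X/2]$ with $d(x,y)\le\varepsilon_X'\Rightarrow d(x,[x,y]),d(y,[x,y])<\varepsilon_X/2$, and $\varepsilon_X''\in(0,\varepsilon_X'/12)$ with $d(x,y)\le\varepsilon_X''\Rightarrow d(\varphi^i x,\varphi^i y)\le\varepsilon_X'/2$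 ($|i|\le2$) and $d([x,y],x),d([x,y],y)\le\varepsilon_X'/4$. Rectangle: nonempty $R$, $\operatorname{diam}R\le\varepsilon_X'$, $[x,y]\in R$ for $x,y\in R$; $X^{s/u}(x,R)=X^{s/u}(x,2\varepsilon_X')\cap R$; proper: closed with $R=\operatorname{cl}\operatorname{int}R$. Markov partition: finite cover by nonempty proper rectangles with disjoint interiors such that $\varphi(X^u(x,R_i))\supset X^u(\varphi x,R_j)$ and $\varphi(X^s(x,R_i))\subset X^s(\varphi x,R_j)$ whenever $x\in\operatorname{int}R_i\cap\varphi^{-1}(\operatorname{int}R_j)$. $\mathcal U\vee\mathcal W=\{U\cap W:U\in\mathcal U,W\in\mathcal W\}$, $\varphi(\mathcal U)=\{\varphi(U):U\in\mathcal U\}$. The generated sequence: $\mathcal R_0=\{X\}$, $\mathcal R_n=\{R\in\bigvee_{i=1-n}^{n-1}\varphi^{-i}(\mathcal R_1):\operatorname{int}R\ne\varnothing\}$. *)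

theory Defs
  imports "HOL-Analysis.Analysis"
begin

text \<open>The Smale space is the whole (compact) type 'a; the bracket is a total
function of which only the values on pairs at distance at most epsX matter.\<close>

definition local_stable :: "('a::metric_space \<Rightarrow> 'a \<Rightarrow> 'a) \<Rightarrow> 'a \<Rightarrow> real \<Rightarrow> 'a set" where
  "local_stable br x e = {y. dist x y < e \<and> br x y = y}"

definition local_unstable :: "('a::metric_space \<Rightarrow> 'a \<Rightarrow> 'a) \<Rightarrow> 'a \<Rightarrow> real \<Rightarrow> 'a set" where
  "local_unstable br x e = {y. dist x y < e \<and> br y x = y}"

definition smale_space ::
  "('a::metric_space \<Rightarrow> 'a) \<Rightarrow> ('a \<Rightarrow> 'a \<Rightarrow> 'a) \<Rightarrow> real \<Rightarrow> real \<Rightarrow> bool" where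
  "smale_space phi br epsX lamX \<longleftrightarrow>
     compact (UNIV :: 'a set) \<and>
     bij phi \<and> continuous_on UNIV phi \<and> continuous_on UNIV (inv phi) \<and>
     epsX > 0 \<and> lamX > 1 \<and>
     continuous_on {p. dist (fst p) (snd p) \<le> epsX} (\<lambda>p. br (fst p) (snd p)) \<and>
     (\<forall>x. br x x = x) \<and>
     (\<forall>x y z. dist y z \<le> epsX \<and> dist x (br y z) \<le> epsX \<and> dist x z \<le> epsX
        \<longrightarrow> br x (br y z) = br x z) \<and>
     (\<forall>x y z. dist x y \<le> epsX \<and> dist (br x y) z \<le> epsX \<and> dist x z \<le> epsX
        \<longrightarrow> br (br x y) z = br x z) \<and>
     (\<forall>x y. dist x y \<le> epsX \<and> dist (phi x) (phi y) \<le> epsX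
        \<longrightarrow> phi (br x y) = br (phi x) (phi y)) \<and>
     (\<forall>x y z. y \<in> local_stable br x epsX \<and> z \<in> local_stable br x epsX
        \<longrightarrow> dist (phi y) (phi z) \<le> dist y z / lamX) \<and>
     (\<forall>x y z. y \<in> local_unstable br x epsX \<and> z \<in> local_unstable br x epsX
        \<longrightarrow> dist (inv phi y) (inv phi z) \<le> dist y z / lamX)"

text \<open>Irreducibility; \<nat> is taken to be {1,2,...}.\<close>
definition irreducible_dyn :: "('a::topological_space \<Rightarrow> 'a) \<Rightarrow> bool" where
  "irreducible_dyn phi \<longleftrightarrow>
     (\<forall>U V. open U \<and> open V \<and> U \<noteq> {} \<and> V \<noteq> {} \<longrightarrow>
        (\<exists>n::nat. n \<ge> 1 \<and> (phi ^^ n) ` U \<inter> V \<noteq> {}))"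

text \<open>The constants epsX' and epsX'' fixed in the paper.\<close>
definition eps1_ok :: "('a::metric_space \<Rightarrow> 'a \<Rightarrow> 'a) \<Rightarrow> real \<Rightarrow> real \<Rightarrow> bool" where
  "eps1_ok br epsX e1 \<longleftrightarrow> 0 < e1 \<and> e1 \<le> epsX / 2 \<and>
     (\<forall>x y. dist x y \<le> e1 \<longrightarrow> dist x (br x y) < epsX / 2 \<and> dist y (br x y) < epsX / 2)"

definition zpow :: "('a \<Rightarrow> 'a) \<Rightarrow> int \<Rightarrow> 'a \<Rightarrow> 'a" where
  "zpow phi i = (if i \<ge> 0 then phi ^^ nat i else inv phi ^^ nat (- i))"

definition eps2_ok :: "('a::metric_space \<Rightarrow> 'a) \<Rightarrow> ('a \<Rightarrow> 'a \<Rightarrow> 'a) \<Rightarrow> real \<Rightarrow> real \<Rightarrow> bool" where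
  "eps2_ok phi br e1 e2 \<longleftrightarrow> 0 < e2 \<and> e2 < e1 / 12 \<and>
     (\<forall>x y. dist x y \<le> e2 \<longrightarrow>
        (\<forall>i::int. \<bar>i\<bar> \<le> 2 \<longrightarrow> dist (zpow phi i x) (zpow phi i y) \<le> e1 / 2) \<and>
        dist (br x y) x \<le> e1 / 4 \<and> dist (br x y) y \<le> e1 / 4)"

definition rectangle :: "('a::metric_space \<Rightarrow> 'a \<Rightarrow> 'a) \<Rightarrow> real \<Rightarrow> 'a set \<Rightarrow> bool" where
  "rectangle br e1 R \<longleftrightarrow> R \<noteq> {} \<and> diameter R \<le> e1 \<and> (\<forall>x\<in>R. \<forall>y\<in>R. br x y \<in> R)"

definition stable_in :: "('a::metric_space \<Rightarrow> 'a \<Rightarrow> 'a) \<Rightarrow> real \<Rightarrow> 'a \<Rightarrow> 'a set \<Rightarrow> 'a set" where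
  "stable_in br e1 x R = local_stable br x (2 * e1) \<inter> R"

definition unstable_in :: "('a::metric_space \<Rightarrow> 'a \<Rightarrow> 'a) \<Rightarrow> real \<Rightarrow> 'a \<Rightarrow> 'a set \<Rightarrow> 'a set" where
  "unstable_in br e1 x R = local_unstable br x (2 * e1) \<inter> R"

definition proper_rect :: "('a::metric_space \<Rightarrow> 'a \<Rightarrow> 'a) \<Rightarrow> real \<Rightarrow> 'a set \<Rightarrow> bool" where
  "proper_rect br e1 R \<longleftrightarrow> rectangle br e1 R \<and> closed R \<and> R = closure (interior R)"

definition markov_partition ::
  "('a::metric_space \<Rightarrow> 'a) \<Rightarrow> ('a \<Rightarrow> 'a \<Rightarrow> 'a) \<Rightarrow> real \<Rightarrow> 'a set set \<Rightarrow> bool" where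
  "markov_partition phi br e1 P \<longleftrightarrow>
     finite P \<and> \<Union>P = UNIV \<and> (\<forall>R\<in>P. proper_rect br e1 R) \<and>
     (\<forall>R\<in>P. \<forall>S\<in>P. R \<noteq> S \<longrightarrow> interior R \<inter> interior S = {}) \<and>
     (\<forall>Ri\<in>P. \<forall>Rj\<in>P. \<forall>x. x \<in> interior Ri \<and> phi x \<in> interior Rj \<longrightarrow>
        phi ` unstable_in br e1 x Ri \<supseteq> unstable_in br e1 (phi x) Rj \<and>
        phi ` stable_in br e1 x Ri \<subseteq> stable_in br e1 (phi x) Rj)"

definition cover_join :: "'a set set \<Rightarrow> 'a set set \<Rightarrow> 'a set set" where
  "cover_join U W = {A \<inter> B | A B. A \<in> U \<and> B \<in> W}"

definition cover_image :: "('a \<Rightarrow> 'b) \<Rightarrow> 'a set set \<Rightarrow> 'b set set" where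
  "cover_image f U = (\<lambda>A. f ` A) ` U"

definition big_join :: "int set \<Rightarrow> (int \<Rightarrow> 'a set set) \<Rightarrow> 'a set set" where
  "big_join I C = {(\<Inter>i\<in>I. f i) | f. \<forall>i\<in>I. f i \<in> C i}"

definition generated :: "('a::topological_space \<Rightarrow> 'a) \<Rightarrow> 'a set set \<Rightarrow> nat \<Rightarrow> 'a set set" where
  "generated phi R1 n = (if n = 0 then {UNIV} else
     {R \<in> big_join {1 - int n .. int n - 1} (\<lambda>i. cover_image (zpow phi (- i)) R1).
        interior R \<noteq> {}})"

end

theory Submission
  imports Defs
begin

(* An element of R_m is a cylinder: the set of points whose orbit visits prescribed
   rectangles at the times 1-m, ..., m-1. Shifting time by one turns phi(A), B and
   phi^-1(C), for A, B, C in R_n, into cylinders on the windows [-n, n-2], [1-n, n-1]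
   and [2-n, n], so their intersection is a cylinder on [-n, n] once the three codes
   agree on the overlaps. They do when the intersection X has nonempty interior: if two
   codes prescribe rectangles S and S' at time i, then phi^i maps X into S \<inter> S', so the
   interiors of S and S' meet and S = S'. *)

lemma zpow_0 [simp]: "zpow phi 0 = id"
  by (simp add: zpow_def fun_eq_iff)

lemma zpow_1 [simp]: "zpow phi 1 = phi"
  by (simp add: zpow_def fun_eq_iff)

lemma zpow_minus_1 [simp]: "zpow phi (- 1) = inv phi"
  by (simp add: zpow_def fun_eq_iff)

lemma zpow_Suc:
  assumes "bij phi"
  shows "zpow phi (i + 1) = phi \<circ> zpow phi i"
proof (cases "i \<ge> 0")
  case True
  then have "nat (i + 1) = Suc (nat i)" by simp
  with True show ?thesis by (simp add: zpow_def fun_eq_iff)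
next
  case False
  then have "nat (- i) = Suc (nat (- (i + 1)))" by simp
  with False assms show ?thesis
    by (simp add: zpow_def fun_eq_iff bij_is_surj surj_f_inv_f)
qed

lemma zpow_add:
  assumes "bij phi"
  shows "zpow phi (a + b) = zpow phi a \<circ> zpow phi b"
proof (induction a rule: int_induct[where k = 0])
  case base
  show ?case by simp
next
  case (step1 i)
  have "zpow phi (i + 1 + b) = phi \<circ> zpow phi (i + b)"
    using zpow_Suc[OF assms, of "i + b"] by (simp add: ac_simps)
  with step1 show ?case by (simp add: zpow_Suc[OF assms] o_assoc)
next
  case (step2 i)
  have "phi (zpow phi (i - 1 + b) x) = phi (zpow phi (i - 1) (zpow phi b x))" for x
    using step2 zpow_Suc[OF assms, of "i - 1 + b"] zpow_Suc[OF assms, of "i - 1"]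
    by (simp add: fun_eq_iff)
  then show ?case
    using bij_is_inj[OF assms] by (simp add: fun_eq_iff inj_eq)
qed

lemma zpow_cancel:
  assumes "bij phi"
  shows "zpow phi (- k) (zpow phi k x) = x"
  using zpow_add[OF assms, of "- k" k] by (simp add: fun_eq_iff)

lemma zpow_image_eq_vimage:
  assumes "bij phi"
  shows "zpow phi k ` S = zpow phi (- k) -` S"
  using zpow_cancel[OF assms, of k] zpow_cancel[OF assms, of "- k"]
  by (auto intro: rev_image_eqI[of "zpow phi (- k) x" for x])

lemma homeomorphism_UNIV_imp_bij: "homeomorphism UNIV UNIV f g \<Longrightarrow> bij f"
  unfolding homeomorphism_def by (metis bij_betw_byWitness subset_UNIV)

lemma homeomorphism_zpow:
  assumes hom: "homeomorphism UNIV UNIV phi (inv phi)"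
  shows "homeomorphism UNIV UNIV (zpow phi k) (zpow phi (- k))"
proof -
  have bij: "bij phi"
    using hom by (rule homeomorphism_UNIV_imp_bij)
  show ?thesis
  proof (induction k rule: int_induct[where k = 0])
    case base
    show ?case by (simp add: homeomorphism_def)
  next
    case (step1 i)
    have "zpow phi (i + 1) = phi \<circ> zpow phi i" "zpow phi (- (i + 1)) = zpow phi (- i) \<circ> inv phi"
      using zpow_add[OF bij, of 1 i] zpow_add[OF bij, of "- i" "- 1"] by (simp_all add: ac_simps)
    then show ?case using homeomorphism_compose[OF step1(2) hom] by (simp only:)
  next
    case (step2 i)
    have "zpow phi (i - 1) = inv phi \<circ> zpow phi i" "zpow phi (- (i - 1)) = zpow phi (- i) \<circ> phi"
      using zpow_add[OF bij, of "- 1" i] zpow_add[OF bij, of "- i" 1] by (simp_all add: ac_simps)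
    then show ?case using homeomorphism_compose[OF step2(2) homeomorphism_symD[OF hom]] by (simp only:)
  qed
qed

lemma homeomorphism_image_interior_subset:
  assumes "homeomorphism UNIV UNIV f g"
  shows "f ` interior S \<subseteq> interior (f ` S)"
proof (rule interior_maximal)
  show "f ` interior S \<subseteq> f ` S" using interior_subset by (rule image_mono)
  show "open (f ` interior S)"
    using homeomorphism_imp_open_map[OF assms, of "interior S"] by simp
qed

lemma interior_homeomorphism_image:
  assumes hom: "homeomorphism UNIV UNIV f g"
  shows "interior (f ` S) = f ` interior S"
proof -
  have "g ` interior (f ` S) \<subseteq> interior (g ` f ` S)"
    by (rule homeomorphism_image_interior_subset[OF homeomorphism_symD[OF hom]])
  also have "g ` f ` S = S"
    using homeomorphism_apply1[OF hom] by (simp add: image_comp)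
  finally have "f ` g ` interior (f ` S) \<subseteq> f ` interior S" by (rule image_mono)
  moreover have "f ` g ` interior (f ` S) = interior (f ` S)"
    using homeomorphism_apply2[OF hom] by (simp add: image_comp)
  ultimately show ?thesis using homeomorphism_image_interior_subset[OF hom] by blast
qed

definition cylinder :: "('a \<Rightarrow> 'a) \<Rightarrow> int set \<Rightarrow> (int \<Rightarrow> 'a set) \<Rightarrow> 'a set" where
  "cylinder phi I w = {x. \<forall>i\<in>I. zpow phi i x \<in> w i}"

definition cylinders :: "('a \<Rightarrow> 'a) \<Rightarrow> 'a set set \<Rightarrow> int set \<Rightarrow> 'a set set" where
  "cylinders phi P I = {cylinder phi I w | w. w ` I \<subseteq> P}"

lemma cylinder_Un: "cylinder phi (I \<union> J) w = cylinder phi I w \<inter> cylinder phi J w"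
  by (auto simp: cylinder_def)

lemma cylinder_cong: "(\<And>i. i \<in> I \<Longrightarrow> v i = w i) \<Longrightarrow> cylinder phi I v = cylinder phi I w"
  by (simp add: cylinder_def)

lemma zpow_image_cylinder:
  assumes "bij phi"
  shows "zpow phi k ` cylinder phi {a..b} w = cylinder phi {a - k..b - k} (\<lambda>i. w (i + k))"
proof -
  have shift: "(\<forall>j\<in>{a - k..b - k}. Q j) \<longleftrightarrow> (\<forall>i\<in>{a..b}. Q (i - k))" for Q
  proof
    assume "\<forall>i\<in>{a..b}. Q (i - k)"
    moreover have "j + k \<in> {a..b}" if "j \<in> {a - k..b - k}" for j
      using that by simp
    ultimately show "\<forall>j\<in>{a - k..b - k}. Q j" by fastforce
  qed simp
  have "zpow phi i (zpow phi (- k) x) = zpow phi (i - k) x" for i x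
    using zpow_add[OF assms, of i "- k"] by simp
  then show ?thesis
    by (auto simp: zpow_image_eq_vimage[OF assms] cylinder_def shift)
qed

lemma big_join_zpow_images_eq_cylinders:
  assumes "bij phi"
  shows "big_join I (\<lambda>i. cover_image (zpow phi (- i)) P) = cylinders phi P I"
proof -
  have inter: "(\<Inter>i\<in>I. zpow phi (- i) ` w i) = cylinder phi I w" for w
  proof -
    have "(\<Inter>i\<in>I. zpow phi (- i) ` w i) = (\<Inter>i\<in>I. zpow phi i -` w i)"
      by (simp add: zpow_image_eq_vimage[OF assms])
    then show ?thesis by (auto simp: cylinder_def)
  qed
  show ?thesis
  proof (intro equalityI subsetI)
    fix X assume "X \<in> big_join I (\<lambda>i. cover_image (zpow phi (- i)) P)"
    then obtain f where f: "\<forall>i\<in>I. \<exists>S. S \<in> P \<and> f i = zpow phi (- i) ` S"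
      and X: "X = (\<Inter>i\<in>I. f i)"
      unfolding big_join_def cover_image_def by blast
    obtain w where "\<forall>i\<in>I. w i \<in> P \<and> f i = zpow phi (- i) ` w i"
      using bchoice[OF f] by blast
    then have "w ` I \<subseteq> P" "X = cylinder phi I w"
      using X inter[of w] by auto
    then show "X \<in> cylinders phi P I"
      unfolding cylinders_def by blast
  next
    fix X assume "X \<in> cylinders phi P I"
    then obtain w where w: "w ` I \<subseteq> P" "X = cylinder phi I w"
      unfolding cylinders_def by blast
    have "X = (\<Inter>i\<in>I. zpow phi (- i) ` w i)"
      using w(2) inter[of w] by simp
    moreover have "\<forall>i\<in>I. zpow phi (- i) ` w i \<in> cover_image (zpow phi (- i)) P"
      using w(1) by (auto simp: cover_image_def)
    ultimately show "X \<in> big_join I (\<lambda>i. cover_image (zpow phi (- i)) P)"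
      unfolding big_join_def by (intro CollectI exI[of _ "\<lambda>i. zpow phi (- i) ` w i"] conjI)
  qed
qed

lemma generated_eq_cylinders:
  assumes "bij phi" "n \<ge> 1"
  shows "generated phi P n = {C \<in> cylinders phi P {1 - int n..int n - 1}. interior C \<noteq> {}}"
  using assms by (simp add: generated_def big_join_zpow_images_eq_cylinders)

lemma cylinder_extend:
  assumes "bij phi" "a \<le> b"
  shows "cylinder phi {a - 1..b + 1} w =
    phi ` cylinder phi {a..b} (\<lambda>i. w (i - 1)) \<inter> cylinder phi {a..b} w
      \<inter> inv phi ` cylinder phi {a..b} (\<lambda>i. w (i + 1))"
proof -
  have "{a - 1..b + 1} = {a - 1..b - 1} \<union> {a..b} \<union> {a + 1..b + 1}"
    using assms(2) by auto
  moreover have "phi ` cylinder phi {a..b} (\<lambda>i. w (i - 1)) = cylinder phi {a - 1..b - 1} w"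
    using zpow_image_cylinder[OF assms(1), of 1 a b "\<lambda>i. w (i - 1)"] by simp
  moreover have "inv phi ` cylinder phi {a..b} (\<lambda>i. w (i + 1)) = cylinder phi {a + 1..b + 1} w"
    using zpow_image_cylinder[OF assms(1), of "- 1" a b "\<lambda>i. w (i + 1)"] by simp
  ultimately show ?thesis by (simp add: cylinder_Un)
qed

lemma cylinder_codes_agree:
  assumes hom: "homeomorphism UNIV UNIV phi (inv phi)"
    and disj: "pairwise (\<lambda>R S. interior R \<inter> interior S = {}) P"
    and X: "interior X \<noteq> {}" "X \<subseteq> cylinder phi I v" "X \<subseteq> cylinder phi J w"
    and codes: "v ` I \<subseteq> P" "w ` J \<subseteq> P"
    and i: "i \<in> I" "i \<in> J"
  shows "v i = w i"
proof (rule ccontr)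
  assume ne: "v i \<noteq> w i"
  have "zpow phi i ` X \<subseteq> v i \<inter> w i"
    using X(2,3) i by (auto simp: cylinder_def)
  then have "interior (zpow phi i ` X) \<subseteq> interior (v i) \<inter> interior (w i)"
    by (metis interior_Int interior_mono)
  also have "\<dots> = {}"
    using disj ne codes i by (auto simp: pairwise_def)
  finally show False
    using X(1) by (simp add: interior_homeomorphism_image[OF homeomorphism_zpow[OF hom]])
qed

lemma cylinders_split:
  assumes hom: "homeomorphism UNIV UNIV phi (inv phi)" and "a \<le> b"
    and X: "X \<in> cylinders phi P {a - 1..b + 1}" "interior X \<noteq> {}"
  obtains A B C where
    "A \<in> cylinders phi P {a..b}" "B \<in> cylinders phi P {a..b}" "C \<in> cylinders phi P {a..b}"
    "interior A \<noteq> {}" "interior B \<noteq> {}" "interior C \<noteq> {}"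
    "X = phi ` A \<inter> B \<inter> inv phi ` C"
proof -
  have bij: "bij phi"
    using hom by (rule homeomorphism_UNIV_imp_bij)
  obtain w where w: "w ` {a - 1..b + 1} \<subseteq> P" "X = cylinder phi {a - 1..b + 1} w"
    using X(1) unfolding cylinders_def by blast
  define A where "A = cylinder phi {a..b} (\<lambda>i. w (i - 1))"
  define B where "B = cylinder phi {a..b} w"
  define C where "C = cylinder phi {a..b} (\<lambda>i. w (i + 1))"
  have XABC: "X = phi ` A \<inter> B \<inter> inv phi ` C"
    unfolding A_def B_def C_def w(2) using cylinder_extend[OF bij \<open>a \<le> b\<close>] .
  have "A \<in> cylinders phi P {a..b}" "B \<in> cylinders phi P {a..b}" "C \<in> cylinders phi P {a..b}"
    using w(1) unfolding A_def B_def C_def cylinders_def by (fastforce simp: image_subset_iff)+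
  moreover have "interior X \<subseteq> phi ` interior A" "interior X \<subseteq> interior B"
    "interior X \<subseteq> inv phi ` interior C"
    using interior_mono[of X] XABC
      interior_homeomorphism_image[OF hom] interior_homeomorphism_image[OF homeomorphism_symD[OF hom]]
    by (metis inf_le1 inf_le2 le_infE)+
  then have "interior A \<noteq> {}" "interior B \<noteq> {}" "interior C \<noteq> {}"
    using X(2) by auto
  ultimately show ?thesis using that XABC by blast
qed

lemma cylinders_glue:
  assumes hom: "homeomorphism UNIV UNIV phi (inv phi)"
    and disj: "pairwise (\<lambda>R S. interior R \<inter> interior S = {}) P" and "a \<le> b"
    and ABC: "A \<in> cylinders phi P {a..b}" "B \<in> cylinders phi P {a..b}" "C \<in> cylinders phi P {a..b}"
    and X: "interior (phi ` A \<inter> B \<inter> inv phi ` C) \<noteq> {}"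
  shows "phi ` A \<inter> B \<inter> inv phi ` C \<in> cylinders phi P {a - 1..b + 1}"
proof -
  have bij: "bij phi"
    using hom by (rule homeomorphism_UNIV_imp_bij)
  obtain u v w where codes: "u ` {a..b} \<subseteq> P" "v ` {a..b} \<subseteq> P" "w ` {a..b} \<subseteq> P"
    and A: "A = cylinder phi {a..b} u" and B: "B = cylinder phi {a..b} v"
    and C: "C = cylinder phi {a..b} w"
    using ABC unfolding cylinders_def by blast
  let ?X = "phi ` A \<inter> B \<inter> inv phi ` C"
  have Xu: "?X \<subseteq> cylinder phi {a - 1..b - 1} (\<lambda>i. u (i + 1))"
    using zpow_image_cylinder[OF bij, of 1 a b u] by (auto simp: A)
  have Xw: "?X \<subseteq> cylinder phi {a + 1..b + 1} (\<lambda>i. w (i - 1))"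
    using zpow_image_cylinder[OF bij, of "- 1" a b w] by (auto simp: C)
  have Xv: "?X \<subseteq> cylinder phi {a..b} v"
    by (auto simp: B)
  have codes_u: "(\<lambda>i. u (i + 1)) ` {a - 1..b - 1} \<subseteq> P"
    and codes_w: "(\<lambda>i. w (i - 1)) ` {a + 1..b + 1} \<subseteq> P"
    using codes(1,3) by (auto simp: image_subset_iff)
  have agree_u: "u (i + 1) = v i" if "i \<in> {a - 1..b - 1}" "i \<in> {a..b}" for i
    using cylinder_codes_agree[OF hom disj X Xu Xv codes_u codes(2) that] by simp
  have agree_w: "w (i - 1) = v i" if "i \<in> {a + 1..b + 1}" "i \<in> {a..b}" for i
    using cylinder_codes_agree[OF hom disj X Xw Xv codes_w codes(2) that] by simp
  define z where "z i = (if i < a then u (i + 1) else if b < i then w (i - 1) else v i)" for i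
  have "A = cylinder phi {a..b} (\<lambda>i. z (i - 1))"
    unfolding A using agree_u[of "i - 1" for i] by (intro cylinder_cong) (auto simp: z_def)
  moreover have "B = cylinder phi {a..b} z"
    unfolding B by (intro cylinder_cong) (simp add: z_def)
  moreover have "C = cylinder phi {a..b} (\<lambda>i. z (i + 1))"
    unfolding C using agree_w[of "i + 1" for i] \<open>a \<le> b\<close>
    by (intro cylinder_cong) (auto simp: z_def)
  ultimately have "?X = cylinder phi {a - 1..b + 1} z"
    using cylinder_extend[OF bij \<open>a \<le> b\<close>] by simp
  moreover have "z ` {a - 1..b + 1} \<subseteq> P"
    using codes \<open>a \<le> b\<close> by (auto simp: z_def image_subset_iff)
  ultimately show ?thesis
    unfolding cylinders_def by blast
qed

lemma smale_space_homeomorphism: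
  assumes "smale_space phi br epsX lamX"
  shows "homeomorphism UNIV UNIV phi (inv phi)"
proof -
  have "bij phi" "continuous_on UNIV phi" "continuous_on UNIV (inv phi)"
    using assms unfolding smale_space_def by auto
  then show ?thesis
    by (intro homeomorphismI) (auto simp: bij_is_inj bij_is_surj surj_f_inv_f)
qed

lemma mem_cover_join_triple:
  "X \<in> cover_join (cover_join (cover_image f G) G) (cover_image g G) \<longleftrightarrow>
    (\<exists>A\<in>G. \<exists>B\<in>G. \<exists>C\<in>G. X = f ` A \<inter> B \<inter> g ` C)"
  unfolding cover_join_def cover_image_def by blast

lemma cylinders_extend_eq:
  assumes hom: "homeomorphism UNIV UNIV phi (inv phi)"
    and disj: "pairwise (\<lambda>R S. interior R \<inter> interior S = {}) P" and "a \<le> b"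
  defines "G \<equiv> {C \<in> cylinders phi P {a..b}. interior C \<noteq> {}}"
  shows "{X \<in> cylinders phi P {a - 1..b + 1}. interior X \<noteq> {}} =
    {X \<in> cover_join (cover_join (cover_image phi G) G) (cover_image (inv phi) G). interior X \<noteq> {}}"
proof (intro set_eqI iffI)
  fix X assume "X \<in> {X \<in> cylinders phi P {a - 1..b + 1}. interior X \<noteq> {}}"
  then show "X \<in> {X \<in> cover_join (cover_join (cover_image phi G) G) (cover_image (inv phi) G).
      interior X \<noteq> {}}"
    using cylinders_split[OF hom \<open>a \<le> b\<close>, of X P]
    by (simp add: mem_cover_join_triple G_def) metis
next
  fix X assume "X \<in> {X \<in> cover_join (cover_join (cover_image phi G) G) (cover_image (inv phi) G).
      interior X \<noteq> {}}"
  then obtain A B C where ABC: "A \<in> G" "B \<in> G" "C \<in> G" "X = phi ` A \<inter> B \<inter> inv phi ` C"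
    and "interior X \<noteq> {}"
    unfolding mem_cover_join_triple by blast
  then show "X \<in> {X \<in> cylinders phi P {a - 1..b + 1}. interior X \<noteq> {}}"
    using cylinders_glue[OF hom disj \<open>a \<le> b\<close>, of A B C] unfolding G_def by simp
qed

theorem lemma5p9:
  fixes phi :: "'a::metric_space \<Rightarrow> 'a" and br :: "'a \<Rightarrow> 'a \<Rightarrow> 'a"
    and epsX lamX e1 e2 :: real and R1 :: "'a set set" and n :: nat
  assumes "smale_space phi br epsX lamX"
    and "irreducible_dyn phi"
    and "eps1_ok br epsX e1"
    and "eps2_ok phi br e1 e2"
    and "markov_partition phi br e1 R1"
    and "\<forall>R\<in>R1. diameter R \<le> e2"
    and "n \<ge> 1"
  shows "generated phi R1 (n + 1) =
    {R \<in> cover_join (cover_join (cover_image phi (generated phi R1 n)) (generated phi R1 n))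
                     (cover_image (inv phi) (generated phi R1 n)).
       interior R \<noteq> {}}"
proof -
  have hom: "homeomorphism UNIV UNIV phi (inv phi)"
    using assms(1) by (rule smale_space_homeomorphism)
  have bij: "bij phi"
    using hom by (rule homeomorphism_UNIV_imp_bij)
  have disj: "pairwise (\<lambda>R S. interior R \<inter> interior S = {}) R1"
    using assms(5) unfolding markov_partition_def pairwise_def by blast
  have window: "{1 - int (n + 1)..int (n + 1) - 1} = {(1 - int n) - 1..(int n - 1) + 1}"
    by simp
  show ?thesis
    using generated_eq_cylinders[OF bij, of "n + 1" R1] generated_eq_cylinders[OF bij \<open>n \<ge> 1\<close>]
      cylinders_extend_eq[OF hom disj, of "1 - int n" "int n - 1"] \<open>n \<ge> 1\<close>
    unfolding window by simp
qed

end
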